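(* Let $n,m$ be integers with $n\geq m\geq 0$. For every integer $k\geq 4$, $$ gr_{k}(K_{3} : S(n,m)) \geq \begin{cases} 5\cdot\frac{n}{2} + m(k-3)+1 & \text{ if $n$ is even,}\\ 5\cdot\frac{n-1}{2} + m(k-3)+ 2 & \text{ if $n$ is odd.} \end{cases} $$
   Context: For integers $n\geq m\geq 0$, the double star $S(n,m)$ is the graph obtained from the disjoint union of the stars $K_{1,n}$ and $K_{1,m}$ by adding an edge between their centers. A $k$-coloring of a graph is an assignment of one of $k$ colors to each edge. A subgraph is rainbow if all its edges have distinct colors and monochromatic if all its edges have the same color. For graphs $G,H$ and a positive integer $k$, the Gallai–Ramsey number $gr_k(G:H)$ is the minimum integer $N$ such that every $k$-coloring of the edges of the complete graph $K_N$ contains either a rainbow copy of $G$ or a monochromatic copy of $H$. *)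

theory Defs
  imports Main "HOL-Library.Extended_Nat"
begin

type_synonym 'a graph = "'a set \<times> 'a set set"

definition is_graph :: "'a graph \<Rightarrow> bool" where
  "is_graph G \<longleftrightarrow> finite (fst G) \<and> (\<forall>e\<in>snd G. e \<subseteq> fst G \<and> card e = 2)"

definition KN_edges :: "nat \<Rightarrow> nat set set" where
  "KN_edges N = {e. e \<subseteq> {..<N} \<and> card e = 2}"

definition k_coloring :: "nat \<Rightarrow> nat \<Rightarrow> (nat set \<Rightarrow> nat) \<Rightarrow> bool" where
  "k_coloring k N c \<longleftrightarrow> (\<forall>e\<in>KN_edges N. c e < k)"

definition rainbow_copy :: "nat \<Rightarrow> (nat set \<Rightarrow> nat) \<Rightarrow> 'a graph \<Rightarrow> bool" where
  "rainbow_copy N c H \<longleftrightarrow>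
     (\<exists>f. inj_on f (fst H) \<and> f ` fst H \<subseteq> {..<N} \<and> inj_on (\<lambda>e. c (f ` e)) (snd H))"

definition mono_copy :: "nat \<Rightarrow> (nat set \<Rightarrow> nat) \<Rightarrow> 'a graph \<Rightarrow> bool" where
  "mono_copy N c H \<longleftrightarrow>
     (\<exists>f col. inj_on f (fst H) \<and> f ` fst H \<subseteq> {..<N} \<and> (\<forall>e\<in>snd H. c (f ` e) = col))"

text \<open>Gallai-Ramsey number, as an extended natural (infinity if no such N exists).\<close>

definition gr :: "nat \<Rightarrow> 'a graph \<Rightarrow> 'b graph \<Rightarrow> enat" where
  "gr k G H = Inf (enat ` {N. \<forall>c. k_coloring k N c \<longrightarrow> rainbow_copy N c G \<or> mono_copy N c H})"

definition K3 :: "nat graph" where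
  "K3 = ({0,1,2}, {{0,1},{1,2},{0,2}})"

definition double_star :: "nat \<Rightarrow> nat \<Rightarrow> nat graph" where
  "double_star n m = ({0..<n+m+2},
     {{0,1}} \<union> (\<lambda>i. {0,i}) ` {2..<n+2} \<union> (\<lambda>j. {1,j}) ` {n+2..<n+m+2})"

end

theory Submission
  imports Defs
begin

text \<open>Write n = 2s + e with e \<le> 1 and colour K_N, N = 5s + e + m(k - 3), as follows.
  The first 5s + e vertices (level 0) are split into their residue classes mod 5: an edge
  inside a class gets colour 2, and an edge between two classes gets colour 0 or 1 according
  as the classes are adjacent on the pentagon Z/5 or not. The remaining vertices form k - 3
  consecutive blocks of m vertices (levels 1, ..., k - 3); an edge inside a block gets
  colour 2 and an edge between levels i < j gets colour j + 2.

  No triangle is rainbow: if it meets several levels and j is the highest of them, two of its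
  edges have colour j + 2; inside a level the colours are 0, 1, 2, so a rainbow triangle
  would have an edge inside a residue class, and then its other two edges have the same colour.
  A monochromatic S(n, m) needs adjacent centres with n + 1 and m + 1 neighbours in its colour.
  In colours 0, 1, 2 no vertex has more than n such neighbours: they lie in one block of
  m \<le> n vertices, or in at most two residue classes, which together have at most 2s + e
  vertices. An edge of colour j + 2 has an endpoint below level j, and the neighbours of that
  endpoint in colour j + 2 are the m vertices of level j.\<close>

lemma KN_edges_mono: "N \<le> N' \<Longrightarrow> KN_edges N \<subseteq> KN_edges N'"
  by (auto simp: KN_edges_def)

lemma rainbow_copy_mono: "N \<le> N' \<Longrightarrow> rainbow_copy N c G \<Longrightarrow> rainbow_copy N' c G"
  unfolding rainbow_copy_def by (meson lessThan_subset_iff order_trans)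

lemma mono_copy_mono: "N \<le> N' \<Longrightarrow> mono_copy N c H \<Longrightarrow> mono_copy N' c H"
  unfolding mono_copy_def by (meson lessThan_subset_iff order_trans)

lemma less_gr_by_coloring:
  assumes "k_coloring k N c" and "\<not> rainbow_copy N c G" and "\<not> mono_copy N c H"
  shows "enat N < gr k G H"
  unfolding gr_def Suc_ile_eq[symmetric]
proof (rule Inf_greatest)
  fix x
  assume "x \<in> enat ` {N'. \<forall>c. k_coloring k N' c \<longrightarrow> rainbow_copy N' c G \<or> mono_copy N' c H}"
  then obtain N' where x: "x = enat N'"
    and good: "k_coloring k N' c \<Longrightarrow> rainbow_copy N' c G \<or> mono_copy N' c H" for c
    by auto
  have "N < N'"
  proof (rule ccontr)
    assume "\<not> N < N'"
    then have "N' \<le> N" by simp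
    then have "k_coloring k N' c"
      using assms(1) KN_edges_mono by (auto simp: k_coloring_def)
    then show False
      using good \<open>N' \<le> N\<close> assms(2,3) rainbow_copy_mono mono_copy_mono by blast
  qed
  then show "enat (Suc N) \<le> x" using x by simp
qed

lemma no_rainbow_K3:
  assumes "\<And>a b d. c {a, b} = c {b, d} \<or> c {b, d} = c {a, d} \<or> c {a, b} = c {a, d}"
  shows "\<not> rainbow_copy N c K3"
proof
  assume "rainbow_copy N c K3"
  then obtain f where "inj_on (\<lambda>e. c (f ` e)) {{0, 1}, {1, 2}, {0, 2 :: nat}}"
    unfolding rainbow_copy_def K3_def by auto
  then have "c {f 0, f 1} \<noteq> c {f 1, f 2}" "c {f 1, f 2} \<noteq> c {f 0, f 2}"
    "c {f 0, f 1} \<noteq> c {f 0, f 2}"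
    by (auto simp: inj_on_def doubleton_eq_iff)
  then show False using assms by blast
qed

definition color_nbhd :: "nat \<Rightarrow> (nat set \<Rightarrow> nat) \<Rightarrow> nat \<Rightarrow> nat \<Rightarrow> nat set" where
  "color_nbhd N c x i = {w. w < N \<and> w \<noteq> x \<and> c {x, w} = i}"

lemma finite_color_nbhd: "finite (color_nbhd N c x i)"
  by (simp add: color_nbhd_def)

lemma mono_double_star_centres:
  assumes "mono_copy N c (double_star n m)"
  obtains u v where "n + 1 \<le> card (color_nbhd N c u (c {u, v}))"
    and "m + 1 \<le> card (color_nbhd N c v (c {u, v}))"
proof -
  have vertices: "fst (double_star n m) = {0..<n+m+2}"
    by (simp add: double_star_def)
  obtain f i where inj: "inj_on f {0..<n+m+2}" and range: "f ` {0..<n+m+2} \<subseteq> {..<N}"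
    and mono: "\<And>e. e \<in> snd (double_star n m) \<Longrightarrow> c (f ` e) = i"
    using assms unfolding mono_copy_def vertices by auto
  have edge: "c {f a, f b} = i" if "{a, b} \<in> snd (double_star n m)" for a b
    using mono[OF that] by simp
  have nbhd: "f ` A \<subseteq> color_nbhd N c (f a) i"
    if "a \<in> {0..<n+m+2}" and "A \<subseteq> {0..<n+m+2} - {a}"
      and "\<And>b. b \<in> A \<Longrightarrow> {a, b} \<in> snd (double_star n m)"
    for a A
  proof
    fix w assume "w \<in> f ` A"
    then obtain b where b: "b \<in> A" "w = f b" by blast
    have "f b < N" using that(2) b range by auto
    moreover have "f b \<noteq> f a" using that(1,2) b inj by (auto simp: inj_on_def)
    moreover have "c {f a, f b} = i" using that(3) b edge by blast
    ultimately show "w \<in> color_nbhd N c (f a) i" using b by (simp add: color_nbhd_def)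
  qed
  have "inj_on f {1..<n+2}"
    by (rule inj_on_subset[OF inj]) auto
  then have "card (f ` {1..<n+2}) = n + 1"
    by (simp add: card_image)
  moreover have "f ` {1..<n+2} \<subseteq> color_nbhd N c (f 0) i"
    by (rule nbhd) (auto simp: double_star_def)
  ultimately have u: "n + 1 \<le> card (color_nbhd N c (f 0) i)"
    by (metis card_mono finite_color_nbhd)
  have "inj_on f (insert 0 {n+2..<n+m+2})"
    by (rule inj_on_subset[OF inj]) auto
  then have "card (f ` insert 0 {n+2..<n+m+2}) = m + 1"
    by (simp add: card_image)
  moreover have "f ` insert 0 {n+2..<n+m+2} \<subseteq> color_nbhd N c (f 1) i"
    by (rule nbhd) (auto simp: double_star_def insert_commute)
  ultimately have v: "m + 1 \<le> card (color_nbhd N c (f 1) i)"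
    by (metis card_mono finite_color_nbhd)
  have "c {f 0, f 1} = i" by (rule edge) (simp add: double_star_def)
  with u v that show ?thesis by blast
qed

definition pentagon_color :: "nat \<Rightarrow> nat \<Rightarrow> nat" where
  "pentagon_color x y = (if x mod 5 = y mod 5 then 2
     else if (x + 1) mod 5 = y mod 5 \<or> (y + 1) mod 5 = x mod 5 then 0 else 1)"

lemma pentagon_color_le: "pentagon_color x y \<le> 2"
  by (simp add: pentagon_color_def)

lemma pentagon_color_commute: "pentagon_color x y = pentagon_color y x"
  by (auto simp: pentagon_color_def)

lemma pentagon_color_cong:
  assumes "x mod 5 = x' mod 5" and "y mod 5 = y' mod 5"
  shows "pentagon_color x y = pentagon_color x' y'"
proof -
  have succ: "(x + 1) mod 5 = (x' + 1) mod 5" "(y + 1) mod 5 = (y' + 1) mod 5"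
    using assms by (metis mod_add_left_eq)+
  show ?thesis
    unfolding pentagon_color_def assms succ ..
qed

lemma less_5_cases:
  fixes a :: nat
  assumes "a < 5"
  obtains "a = 0" | "a = 1" | "a = 2" | "a = 3" | "a = 4"
  using assms by linarith

lemma pentagon_color_eq_2_iff: "pentagon_color x y = 2 \<longleftrightarrow> x mod 5 = y mod 5"
  by (simp add: pentagon_color_def)

lemma pentagon_color_triangle:
  "pentagon_color a b = pentagon_color b c \<or> pentagon_color b c = pentagon_color a c
     \<or> pentagon_color a b = pentagon_color a c"
proof (cases "pentagon_color a b = 2 \<or> pentagon_color b c = 2 \<or> pentagon_color a c = 2")
  case True
  then show ?thesis
    unfolding pentagon_color_eq_2_iff
    by (metis pentagon_color_cong pentagon_color_commute)
next
  case False
  then show ?thesis using pentagon_color_le[of a b] pentagon_color_le[of b c] pentagon_color_le[of a c]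
    by linarith
qed
lemma card_pentagon_color_class: "card {r. r < 5 \<and> pentagon_color x r = i} \<le> 2"
proof -
  let ?S = "\<lambda>a. if i = 2 then {a} else if i = 0 then {(a + 1) mod 5, (a + 4) mod 5}
    else {(a + 2) mod 5, (a + 3) mod 5}"
  have residues: "r \<in> ?S a" if "a < 5" "r < 5" "pentagon_color a r = i" for a r
    using that by (elim less_5_cases; elim less_5_cases[of r]) (auto simp: pentagon_color_def)
  have "{r. r < 5 \<and> pentagon_color x r = i} \<subseteq> ?S (x mod 5)"
  proof
    fix r assume "r \<in> {r. r < 5 \<and> pentagon_color x r = i}"
    then show "r \<in> ?S (x mod 5)"
      using residues[of "x mod 5" r] pentagon_color_cong[of x "x mod 5" r r] by simp
  qed
  moreover have "finite (?S (x mod 5))" "card (?S (x mod 5)) \<le> 2"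
    by (simp_all add: card_insert_if)
  ultimately show ?thesis
    by (meson card_mono order_trans)
qed

lemma card_residues_below:
  fixes q s e :: nat
  assumes "finite R"
  shows "card {w. w < q * s + e \<and> w mod q \<in> R} \<le> s * card R + e"
proof -
  let ?f = "\<lambda>(a, r). q * a + r"
  have "{w. w < q * s + e \<and> w mod q \<in> R}
      \<subseteq> ?f ` ({..<s} \<times> R) \<union> {q * s..<q * s + e}"
  proof
    fix w assume w: "w \<in> {w. w < q * s + e \<and> w mod q \<in> R}"
    show "w \<in> ?f ` ({..<s} \<times> R) \<union> {q * s..<q * s + e}"
    proof (cases "w < q * s")
      case True
      then have "0 < q" by (cases q) auto
      with True have "w div q < s" by (simp add: div_less_iff_less_mult mult.commute)
      then have "(w div q, w mod q) \<in> {..<s} \<times> R" using w by simp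
      then have "w \<in> ?f ` ({..<s} \<times> R)"
        by (rule rev_image_eqI) simp
      then show ?thesis by blast
    next
      case False
      then show ?thesis using w by simp
    qed
  qed
  then have "card {w. w < q * s + e \<and> w mod q \<in> R}
      \<le> card (?f ` ({..<s} \<times> R) \<union> {q * s..<q * s + e})"
    by (rule card_mono[rotated]) (simp add: assms)
  also have "\<dots> \<le> card (?f ` ({..<s} \<times> R)) + card {q * s..<q * s + e}"
    by (rule card_Un_le)
  also have "\<dots> \<le> s * card R + e"
    using card_image_le[of "{..<s} \<times> R" ?f] assms
    by (simp add: card_cartesian_product)
  finally show ?thesis .
qed

definition level :: "nat \<Rightarrow> nat \<Rightarrow> nat \<Rightarrow> nat" where
  "level B m v = (if v < B then 0 else Suc ((v - B) div m))"

definition layered_color :: "nat \<Rightarrow> nat \<Rightarrow> nat \<Rightarrow> nat \<Rightarrow> nat" where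
  "layered_color B m x y =
     (if level B m x \<noteq> level B m y then 2 + max (level B m x) (level B m y)
      else if level B m x = 0 then pentagon_color x y else 2)"

definition layered_edge_color :: "nat \<Rightarrow> nat \<Rightarrow> nat set \<Rightarrow> nat" where
  "layered_edge_color B m e = layered_color B m (Min e) (Max e)"

lemma layered_color_commute: "layered_color B m x y = layered_color B m y x"
  by (simp add: layered_color_def pentagon_color_commute max.commute)

lemma layered_edge_color_pair [simp]: "layered_edge_color B m {x, y} = layered_color B m x y"
  by (cases "x \<le> y") (simp_all add: layered_edge_color_def max_def min_def layered_color_commute)

lemma layered_color_triangle:
  "layered_color B m a b = layered_color B m b c \<or> layered_color B m b c = layered_color B m a c
     \<or> layered_color B m a b = layered_color B m a c"
  using pentagon_color_triangle[of a b c] unfolding layered_color_def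
  by (cases "level B m a" "level B m b" rule: linorder_cases;
      cases "level B m b" "level B m c" rule: linorder_cases;
      cases "level B m a" "level B m c" rule: linorder_cases) (simp_all add: max_def)

lemma level_le:
  assumes "v < B + m * t"
  shows "level B m v \<le> t"
proof (cases "v < B")
  case False
  with assms have "0 < m" by (cases m) auto
  moreover have "v - B < t * m" using False assms by (simp add: mult.commute)
  ultimately have "(v - B) div m < t" by (simp add: div_less_iff_less_mult)
  then show ?thesis using False by (simp add: level_def)
qed (simp add: level_def)

lemma layered_k_coloring: "k_coloring (t + 3) (B + m * t) (layered_edge_color B m)"
  unfolding k_coloring_def
proof
  fix e assume "e \<in> KN_edges (B + m * t)"
  then obtain x y where "e = {x, y}" "x < B + m * t" "y < B + m * t"
    unfolding KN_edges_def by (auto simp: card_2_iff)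
  then show "layered_edge_color B m e < t + 3"
    using level_le[of x B m t] level_le[of y B m t] pentagon_color_le[of x y]
    by (auto simp: layered_color_def)
qed

lemma card_level_block:
  assumes "1 \<le> M"
  shows "card {w. w < B + m * t \<and> level B m w = M} \<le> m"
proof -
  have "{w. w < B + m * t \<and> level B m w = M} \<subseteq> {B + (M - 1) * m..<B + M * m}"
  proof
    fix w assume w: "w \<in> {w. w < B + m * t \<and> level B m w = M}"
    then have "B \<le> w" and div: "(w - B) div m = M - 1"
      using assms by (auto simp: level_def split: if_splits)
    then have "0 < m" using w by (cases m) auto
    moreover have "M - 1 \<le> (w - B) div m" "(w - B) div m < M" using div assms by simp_all
    ultimately have "(M - 1) * m \<le> w - B" "w - B < M * m"
      by (simp_all add: less_eq_div_iff_mult_less_eq div_less_iff_less_mult)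
    then show "w \<in> {B + (M - 1) * m..<B + M * m}" using \<open>B \<le> w\<close>
      by (simp only: atLeastLessThan_iff) linarith
  qed
  then have "card {w. w < B + m * t \<and> level B m w = M} \<le> card {B + (M - 1) * m..<B + M * m}"
    by (rule card_mono[rotated]) simp
  also have "\<dots> = m"
    using assms by (cases M) simp_all
  finally show ?thesis .
qed

lemma layered_no_rainbow_K3: "\<not> rainbow_copy N (layered_edge_color B m) K3"
  by (rule no_rainbow_K3) (simp add: layered_color_triangle)

lemma layered_color_ge_3D:
  assumes "3 \<le> layered_color B m x y"
  shows "level B m x \<noteq> level B m y"
    and "layered_color B m x y = 2 + max (level B m x) (level B m y)"
  using assms pentagon_color_le[of x y] by (auto simp: layered_color_def split: if_splits)

lemma layered_color_le_2D:
  assumes "layered_color B m x y \<le> 2"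
  shows "level B m x = level B m y"
  using assms by (auto simp: layered_color_def split: if_splits)

lemma card_color_nbhd_layered_high:
  assumes "3 \<le> layered_color B m x y"
  shows "card (color_nbhd (B + m * t) (layered_edge_color B m) x (layered_color B m x y)) \<le> m
    \<or> card (color_nbhd (B + m * t) (layered_edge_color B m) y (layered_color B m x y)) \<le> m"
proof -
  let ?nbhd = "color_nbhd (B + m * t) (layered_edge_color B m)"
  let ?M = "max (level B m x) (level B m y)"
  have lower_end: "card (?nbhd z (2 + ?M)) \<le> m" if "level B m z < ?M" for z
  proof -
    have "?nbhd z (2 + ?M) \<subseteq> {w. w < B + m * t \<and> level B m w = ?M}"
    proof
      fix w assume w: "w \<in> ?nbhd z (2 + ?M)"
      then have "layered_color B m z w = 2 + ?M" by (simp add: color_nbhd_def)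
      with that have "max (level B m z) (level B m w) = ?M"
        using layered_color_ge_3D(2)[of B m z w] by simp
      with that w show "w \<in> {w. w < B + m * t \<and> level B m w = ?M}"
        by (auto simp: color_nbhd_def max_def split: if_splits)
    qed
    then have "card (?nbhd z (2 + ?M)) \<le> card {w. w < B + m * t \<and> level B m w = ?M}"
      by (rule card_mono[rotated]) simp
    also have "\<dots> \<le> m"
      using that by (intro card_level_block) simp
    finally show ?thesis .
  qed
  from layered_color_ge_3D(1)[OF assms] have "level B m x < ?M \<or> level B m y < ?M" by auto
  then show ?thesis using lower_end layered_color_ge_3D(2)[OF assms] by auto
qed

lemma card_color_nbhd_layered_low:
  assumes "i \<le> 2" and "B = 5 * s + e" and "m \<le> 2 * s + e"
  shows "card (color_nbhd (B + m * t) (layered_edge_color B m) x i) \<le> 2 * s + e"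
proof -
  let ?nbhd = "color_nbhd (B + m * t) (layered_edge_color B m)"
  have same_level: "?nbhd x i \<subseteq> {w. w < B + m * t \<and> level B m w = level B m x}"
    using assms(1) layered_color_le_2D[of B m x] by (auto simp: color_nbhd_def)
  show ?thesis
  proof (cases "level B m x = 0")
    case True
    let ?R = "{r. r < 5 \<and> pentagon_color x r = i}"
    have "?nbhd x i \<subseteq> {w. w < 5 * s + e \<and> w mod 5 \<in> ?R}"
    proof
      fix w assume w: "w \<in> ?nbhd x i"
      from subsetD[OF same_level w] True have "level B m w = 0" by simp
      then have "w < 5 * s + e" using assms(2) by (simp add: level_def split: if_splits)
      moreover have "pentagon_color x (w mod 5) = i"
        using w True \<open>level B m w = 0\<close> pentagon_color_cong[of x x "w mod 5" w]
        by (simp add: color_nbhd_def layered_color_def)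
      ultimately show "w \<in> {w. w < 5 * s + e \<and> w mod 5 \<in> ?R}" by simp
    qed
    then have "card (?nbhd x i) \<le> card {w. w < 5 * s + e \<and> w mod 5 \<in> ?R}"
      by (rule card_mono[rotated]) simp
    also have "\<dots> \<le> s * card ?R + e"
      by (rule card_residues_below) simp
    also have "\<dots> \<le> 2 * s + e"
      using card_pentagon_color_class[of x i] by simp
    finally show ?thesis .
  next
    case False
    from same_level have "card (?nbhd x i) \<le> card {w. w < B + m * t \<and> level B m w = level B m x}"
      by (rule card_mono[rotated]) simp
    also have "\<dots> \<le> m"
      using False by (intro card_level_block) simp
    finally show ?thesis using assms(3) by simp
  qed
qed

lemma layered_no_mono_double_star:
  assumes "B = 5 * s + e" and "n = 2 * s + e" and "m \<le> n"
  shows "\<not> mono_copy (B + m * t) (layered_edge_color B m) (double_star n m)"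
proof
  let ?nbhd = "color_nbhd (B + m * t) (layered_edge_color B m)"
  assume "mono_copy (B + m * t) (layered_edge_color B m) (double_star n m)"
  then obtain u v
    where u: "n + 1 \<le> card (?nbhd u (layered_color B m u v))"
      and v: "m + 1 \<le> card (?nbhd v (layered_color B m u v))"
    by (auto elim: mono_double_star_centres)
  show False
  proof (cases "layered_color B m u v \<le> 2")
    case True
    then show False
      using card_color_nbhd_layered_low[OF True assms(1), of m t u] u assms(2,3) by simp
  next
    case False
    then show False
      using card_color_nbhd_layered_high[of B m u v t] u v assms(3) by linarith
  qed
qed

theorem lemma2:
  fixes n m k :: nat
  assumes "n \<ge> m" and "k \<ge> 4"
  shows "gr k K3 (double_star n m) \<ge>
           enat (if even n then 5 * (n div 2) + m * (k - 3) + 1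
                 else 5 * ((n - 1) div 2) + m * (k - 3) + 2)"
proof -
  define s e t where "s = n div 2" and "e = n mod 2" and "t = k - 3"
  have n: "n = 2 * s + e" and k: "k = t + 3"
    using assms(2) by (simp_all add: s_def e_def t_def)
  have bound: "(if even n then 5 * (n div 2) + m * (k - 3) + 1
      else 5 * ((n - 1) div 2) + m * (k - 3) + 2) = Suc (5 * s + e + m * t)"
    unfolding s_def e_def t_def by (cases "even n") (auto elim: oddE)
  have "enat (5 * s + e + m * t) < gr k K3 (double_star n m)"
    unfolding k
    by (rule less_gr_by_coloring[OF layered_k_coloring layered_no_rainbow_K3 layered_no_mono_double_star])
      (use n assms(1) in simp_all)
  then show ?thesis
    unfolding bound by (simp add: Suc_ile_eq)
qed

end
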